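(* Let $\mathcal{X}$ be a finite set with $|\mathcal{X}|=r\geq 2$, let $P_X$ be a probability mass function on $\mathcal{X}$ with $P_X(x)>0$ for all $x$, let $f:\mathcal{X}\to\mathcal{Z}=\{0,1\}$ be a given mapping, and fix an integer $l$ with $1\leq l<r$. Then for every $0\leq\rho\leq 1$, the list $\rho$-privacy satisfies $$\pi^{(l)}(\rho)=\pi_u^{(l)}(\rho)=1-\Big[P_X(\Lambda_\rho)+\rho\sum_{i\in\{0,1\}}P_X\big([f^{-1}(i)\setminus\Lambda_\rho]_{l-|\Lambda_\rho|}\big)\Big],$$ and this value is achieved by an add-noise $\rho$-QR.
   Context: Notation: $f^{-1}(i)=\{x\in\mathcal{X}: f(x)=i\}$. For $A\subseteq\mathcal{X}$ and $0\leq t\leq|A|$, $[A]_t$ denotes a set of $t$ largest $P_X$-probability elements of $A$ (ties broken arbitrarily), with $[A]_0=\emptyset$. For a set $S$, $P_X(S)=\sum_{x\in S}P_X(x)$. A $\rho$-QR ($0\leq\rho\leq1$) is a stochastic matrix $W:\mathcal{X}\to\mathcal{Z}$ with $W(f(x)|x)\geq\rho$ for all $x\in\mathcal{X}$; equivalently a $\mathcal{Z}$-valued random variable $F(X)$ with $P(F(X)=i\mid X=x)=W(i|x)$, $X\sim P_X$. With $\mathcal{L}_l$ the set of $l$-element subsets of $\mathcal{X}$, the list privacy of $W$ is $\pi^{(l)}_\rho(W)=\min_{g:\mathcal{Z}\to\mathcal{L}_l}P(X\notin g(F(X)))=1-\sum_{i\in\mathcal{Z}}\max_{L\in\mathcal{L}_l}\sum_{x\in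 L}P_X(x)W(i|x)$, and list $\rho$-privacy is $\pi^{(l)}(\rho)=\max\{\pi^{(l)}_\rho(W): W\text{ a }\rho\text{-QR}\}$. $\pi_u^{(l)}(\rho)$ is defined as $1-\big[P_X(\Lambda_\rho)+\rho\sum_{i\in\mathcal{Z}}P_X([f^{-1}(i)\setminus\Lambda_\rho]_{\min\{l-|\Lambda_\rho|,|f^{-1}(i)\setminus\Lambda_\rho|\}})\big]$, where $\Lambda_\rho$ denotes a maximizer (not necessarily unique) over subsets $\Lambda\subset\mathcal{X}$ with $0\leq|\Lambda|\leq l$ of $P_X(\Lambda)+\rho\sum_{i\in\mathcal{Z}}P_X\big([f^{-1}(i)\setminus\Lambda]_{\min\{l-|\Lambda|,\,|f^{-1}(i)\setminus\Lambda|\}}\big)$. An add-noise $\rho$-QR is a $\rho$-QR of the form $F(X)=f(X)+N \bmod k$ (here $k=|\mathcal{Z}|=2$), where $N$ is a $\mathcal{Z}$-valued random variable such that $N - f(X) - X$ is a Markov chain; equivalently, its stochastic matrix $W$ has identical rows $W(\cdot|x)$ for all $x$ in the same set $f^{-1}(i)$, $i\in\mathcal{Z}$. *)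

theory Defs
  imports Complex_Main
begin

definition Zset :: "nat set" where "Zset = {0, 1}"

definition preim :: "'a set \<Rightarrow> ('a \<Rightarrow> nat) \<Rightarrow> nat \<Rightarrow> 'a set" where
  "preim X f i = {x \<in> X. f x = i}"

text \<open>For t greater than card A we take all of A (only used with t \<le> card A in the definition
  of pi_u, where the index is min (l - |Lambda|) |f^{-1}(i) - Lambda|).\<close>
definition top_set :: "('a \<Rightarrow> real) \<Rightarrow> 'a set \<Rightarrow> nat \<Rightarrow> 'a set" where
  "top_set P A t = (SOME S. S \<subseteq> A \<and> card S = min t (card A) \<and>
                            (\<forall>x\<in>S. \<forall>y\<in>A - S. P y \<le> P x))"

definition is_QR :: "'a set \<Rightarrow> ('a \<Rightarrow> nat) \<Rightarrow> real \<Rightarrow> ('a \<Rightarrow> nat \<Rightarrow> real) \<Rightarrow> bool" where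
  "is_QR X f \<rho> W \<longleftrightarrow>
     (\<forall>x\<in>X. (\<forall>i\<in>Zset. 0 \<le> W x i) \<and> (\<Sum>i\<in>Zset. W x i) = 1 \<and> \<rho> \<le> W x (f x))"

definition is_addnoise_QR :: "'a set \<Rightarrow> ('a \<Rightarrow> nat) \<Rightarrow> real \<Rightarrow> ('a \<Rightarrow> nat \<Rightarrow> real) \<Rightarrow> bool" where
  "is_addnoise_QR X f \<rho> W \<longleftrightarrow> is_QR X f \<rho> W \<and>
     (\<forall>x\<in>X. \<forall>y\<in>X. f x = f y \<longrightarrow> (\<forall>i\<in>Zset. W x i = W y i))"

definition list_privacy_W :: "'a set \<Rightarrow> ('a \<Rightarrow> real) \<Rightarrow> nat \<Rightarrow> ('a \<Rightarrow> nat \<Rightarrow> real) \<Rightarrow> real" where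
  "list_privacy_W X P l W =
     1 - (\<Sum>i\<in>Zset. Max {(\<Sum>x\<in>L. P x * W x i) | L. L \<subseteq> X \<and> card L = l})"

definition list_privacy :: "'a set \<Rightarrow> ('a \<Rightarrow> real) \<Rightarrow> ('a \<Rightarrow> nat) \<Rightarrow> nat \<Rightarrow> real \<Rightarrow> real" where
  "list_privacy X P f l \<rho> = Sup {list_privacy_W X P l W | W. is_QR X f \<rho> W}"

definition Jobj :: "'a set \<Rightarrow> ('a \<Rightarrow> real) \<Rightarrow> ('a \<Rightarrow> nat) \<Rightarrow> nat \<Rightarrow> real \<Rightarrow> 'a set \<Rightarrow> real" where
  "Jobj X P f l \<rho> \<Lambda> = sum P \<Lambda> + \<rho> * (\<Sum>i\<in>Zset.
       sum P (top_set P (preim X f i - \<Lambda>) (min (l - card \<Lambda>) (card (preim X f i - \<Lambda>)))))"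

definition is_Lambda_rho :: "'a set \<Rightarrow> ('a \<Rightarrow> real) \<Rightarrow> ('a \<Rightarrow> nat) \<Rightarrow> nat \<Rightarrow> real \<Rightarrow> 'a set \<Rightarrow> bool" where
  "is_Lambda_rho X P f l \<rho> \<Lambda> \<longleftrightarrow> \<Lambda> \<subset> X \<and> card \<Lambda> \<le> l \<and>
     (\<forall>\<Lambda>'. \<Lambda>' \<subset> X \<and> card \<Lambda>' \<le> l \<longrightarrow> Jobj X P f l \<rho> \<Lambda>' \<le> Jobj X P f l \<rho> \<Lambda>)"

definition Lambda_rho :: "'a set \<Rightarrow> ('a \<Rightarrow> real) \<Rightarrow> ('a \<Rightarrow> nat) \<Rightarrow> nat \<Rightarrow> real \<Rightarrow> 'a set" where
  "Lambda_rho X P f l \<rho> = (SOME \<Lambda>. is_Lambda_rho X P f l \<rho> \<Lambda>)"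

definition pi_u :: "'a set \<Rightarrow> ('a \<Rightarrow> real) \<Rightarrow> ('a \<Rightarrow> nat) \<Rightarrow> nat \<Rightarrow> real \<Rightarrow> real" where
  "pi_u X P f l \<rho> = 1 - Jobj X P f l \<rho> (Lambda_rho X P f l \<rho>)"

end

theory Submission
  imports Defs
begin

(* Every x in f^-1(i) produces output i with probability at least rho under any rho-QR W.
   So on output i the guess "Lambda plus the l - |Lambda| most likely elements of
   f^-1(i) - Lambda" succeeds with probability at least Jobj(Lambda), for every admissible
   Lambda, and the list privacy of W is at most 1 - Jobj(Lambda_rho) = pi_u.

   The bound is attained by the add-noise QR that reports f(X) with probability
   c = max rho (1/2).  Given guessing lists L0 and L1 for the two outputs, exchange elements
   between L0 - L1 and L1 - L0 while this does not decrease the success probability.  At the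
   end, c = 1/2 forces L0 = L1, and c > 1/2 forces f = 0 on L0 - L1 and f = 1 on L1 - L0;
   either way the success probability is at most Jobj(L0 \<inter> L1), with L0 - L1 and L1 - L0
   in place of the two top sets. *)

lemma sum_Zset: "(\<Sum>i\<in>Zset. g i) = g 0 + g 1"
  by (simp add: Zset_def)

lemma top_set_exists:
  fixes P :: "'a \<Rightarrow> real"
  assumes "finite A"
  shows "\<exists>S. S \<subseteq> A \<and> card S = min t (card A) \<and> (\<forall>x\<in>S. \<forall>y\<in>A - S. P y \<le> P x)"
proof (induction t)
  case 0
  show ?case by (intro exI[of _ "{}"]) auto
next
  case (Suc t)
  then obtain S where S: "S \<subseteq> A" "card S = min t (card A)" "\<forall>x\<in>S. \<forall>y\<in>A - S. P y \<le> P x"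
    by blast
  have fin: "finite S" "finite (A - S)"
    using finite_subset[OF S(1) assms] assms by auto
  show ?case
  proof (cases "t < card A")
    case False
    then show ?thesis using S by (intro exI[of _ S]) auto
  next
    case True
    then have "card S < card A" using S by simp
    have "A - S \<noteq> {}"
    proof
      assume "A - S = {}"
      then have "A \<subseteq> S" by blast
      then have "card A \<le> card S" by (rule card_mono[OF fin(1)])
      with \<open>card S < card A\<close> show False by simp
    qed
    then have "Max (P ` (A - S)) \<in> P ` (A - S)"
      using fin by (intro Max_in) auto
    then obtain z where z: "Max (P ` (A - S)) = P z" "z \<in> A - S"
      by (rule imageE)
    have z_max: "P y \<le> P z" if "y \<in> A - S" for y
      using that fin z(1)[symmetric] by simp
    show ?thesis
    proof (intro exI[of _ "insert z S"] conjI)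
      show "insert z S \<subseteq> A" using S(1) z(2) by blast
      show "card (insert z S) = min (Suc t) (card A)" using z(2) fin S(2) True by simp
      show "\<forall>x\<in>insert z S. \<forall>y\<in>A - insert z S. P y \<le> P x"
        using S(3) z_max by blast
    qed
  qed
qed

lemma
  fixes P :: "'a \<Rightarrow> real"
  assumes "finite A"
  shows top_set_subset: "top_set P A t \<subseteq> A"
    and card_top_set: "card (top_set P A t) = min t (card A)"
    and top_set_dominates: "\<lbrakk>x \<in> top_set P A t; y \<in> A - top_set P A t\<rbrakk> \<Longrightarrow> P y \<le> P x"
  using someI_ex[OF top_set_exists[OF assms, of t P]] unfolding top_set_def by blast+

lemma top_set_min_card [simp]: "top_set P A (min t (card A)) = top_set P A t"
  unfolding top_set_def by simp

text \<open>Every element of \<open>S\<close> outside the top set weighs at most as much as every element of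
  the top set outside \<open>S\<close>, and there are no more of the former.\<close>
lemma sum_le_sum_top_set:
  fixes P :: "'a \<Rightarrow> real"
  assumes "finite A" "\<forall>x\<in>A. 0 \<le> P x" "S \<subseteq> A" "card S \<le> t"
  shows "sum P S \<le> sum P (top_set P A t)"
proof -
  define T where "T = top_set P A t"
  have T: "T \<subseteq> A" "card S \<le> card T"
    using assms card_mono[OF assms(1,3)] top_set_subset[OF assms(1)] card_top_set[OF assms(1)]
    unfolding T_def by auto
  have fin: "finite S" "finite T"
    using assms(1,3) T(1) finite_subset by auto
  have dom: "P y \<le> P x" if "x \<in> T - S" "y \<in> S - T" for x y
    using top_set_dominates[OF assms(1)] that assms(3) unfolding T_def by blast
  have card_diff: "card (S - T) \<le> card (T - S)"
    using T(2) fin by (simp add: card_Diff_subset_Int Int_commute)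
  have "sum P (S - T) \<le> sum P (T - S)"
  proof (cases "S - T = {}")
    case True
    have "0 \<le> sum P (T - S)"
      using assms(2) T(1) by (intro sum_nonneg) auto
    then show ?thesis unfolding True by simp
  next
    case False
    then have "0 < card (S - T)" using fin by auto
    then have "0 < card (T - S)" using card_diff by linarith
    then have ne: "T - S \<noteq> {}" using card_gt_0_iff by blast
    define m where "m = Min (P ` (T - S))"
    have "sum P (S - T) \<le> card (S - T) * m"
      using dom fin ne by (intro sum_bounded_above) (simp add: m_def)
    also have "\<dots> \<le> card (T - S) * m"
      using card_diff fin ne assms(2) T(1) Min_in[of "P ` (T - S)"]
      by (intro mult_right_mono) (auto simp: m_def)
    also have "\<dots> \<le> sum P (T - S)"
      using fin by (intro sum_bounded_below) (simp add: m_def)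
    finally show ?thesis .
  qed
  then show ?thesis
    using sum.Int_Diff[OF fin(1), of P T] sum.Int_Diff[OF fin(2), of P S]
    by (simp add: T_def Int_commute)
qed

lemma Jobj_eq:
  "Jobj X P f l \<rho> \<Lambda> =
     sum P \<Lambda> + \<rho> * (\<Sum>i\<in>Zset. sum P (top_set P (preim X f i - \<Lambda>) (l - card \<Lambda>)))"
  unfolding Jobj_def by simp

lemma Jobj_ge:
  fixes P :: "'a \<Rightarrow> real"
  assumes "finite X" "\<forall>x\<in>X. 0 \<le> P x" "0 \<le> \<rho>"
    and "\<And>i. i \<in> Zset \<Longrightarrow> B i \<subseteq> preim X f i - \<Lambda>"
    and "\<And>i. i \<in> Zset \<Longrightarrow> card (B i) \<le> l - card \<Lambda>"
  shows "sum P \<Lambda> + \<rho> * (\<Sum>i\<in>Zset. sum P (B i)) \<le> Jobj X P f l \<rho> \<Lambda>"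
proof -
  have "sum P (B i) \<le> sum P (top_set P (preim X f i - \<Lambda>) (l - card \<Lambda>))" if "i \<in> Zset" for i
    using assms that by (intro sum_le_sum_top_set) (auto simp: preim_def)
  then show ?thesis
    unfolding Jobj_eq using assms(3) by (simp add: sum_mono mult_left_mono)
qed

lemma sum_le_Jobj:
  fixes P :: "'a \<Rightarrow> real"
  assumes "finite X" "\<forall>x\<in>X. 0 \<le> P x" "0 \<le> \<rho>"
  shows "sum P \<Lambda> \<le> Jobj X P f l \<rho> \<Lambda>"
  using Jobj_ge[OF assms, where B = "\<lambda>_. {}"] by simp

lemma is_Lambda_rho_Lambda_rho:
  assumes "finite X" "X \<noteq> {}"
  shows "is_Lambda_rho X P f l \<rho> (Lambda_rho X P f l \<rho>)"
proof -
  define C where "C = {\<Lambda>. \<Lambda> \<subset> X \<and> card \<Lambda> \<le> l}"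
  have "finite C" "{} \<in> C"
    using assms unfolding C_def by (auto intro: finite_subset[of _ "Pow X"])
  then have "Max (Jobj X P f l \<rho> ` C) \<in> Jobj X P f l \<rho> ` C"
    by (intro Max_in) auto
  then obtain \<Lambda> where "\<Lambda> \<in> C" "Jobj X P f l \<rho> \<Lambda> = Max (Jobj X P f l \<rho> ` C)"
    by auto
  then have "is_Lambda_rho X P f l \<rho> \<Lambda>"
    using \<open>finite C\<close> unfolding is_Lambda_rho_def C_def by auto
  then show ?thesis
    unfolding Lambda_rho_def by (rule someI)
qed

lemma pi_u_eq_if_is_Lambda_rho:
  assumes "finite X" "X \<noteq> {}" "is_Lambda_rho X P f l \<rho> \<Lambda>"
  shows "pi_u X P f l \<rho> = 1 - Jobj X P f l \<rho> \<Lambda>"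
proof -
  have "Jobj X P f l \<rho> \<Lambda> = Jobj X P f l \<rho> (Lambda_rho X P f l \<rho>)"
    using assms(3) is_Lambda_rho_Lambda_rho[OF assms(1,2)]
    unfolding is_Lambda_rho_def by (meson order_antisym)
  then show ?thesis
    unfolding pi_u_def by simp
qed

definition max_list_mass ::
    "'a set \<Rightarrow> ('a \<Rightarrow> real) \<Rightarrow> nat \<Rightarrow> ('a \<Rightarrow> nat \<Rightarrow> real) \<Rightarrow> nat \<Rightarrow> real" where
  "max_list_mass X P l W i = Max {(\<Sum>x\<in>L. P x * W x i) | L. L \<subseteq> X \<and> card L = l}"

lemma list_privacy_W_eq:
  "list_privacy_W X P l W = 1 - (max_list_mass X P l W 0 + max_list_mass X P l W 1)"
  unfolding list_privacy_W_def max_list_mass_def sum_Zset ..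

lemma finite_list_masses:
  "finite X \<Longrightarrow> finite {(\<Sum>x\<in>L. P x * W x i) | L. L \<subseteq> X \<and> card L = l}"
  by (rule finite_image_set) (auto intro: finite_subset[of _ "Pow X"])

lemma list_mass_le_max_list_mass:
  "finite X \<Longrightarrow> L \<subseteq> X \<Longrightarrow> card L = l \<Longrightarrow>
    (\<Sum>x\<in>L. P x * W x i) \<le> max_list_mass X P l W i"
  unfolding max_list_mass_def by (rule Max_ge[OF finite_list_masses]) auto

lemma max_list_mass_attained:
  assumes "finite X" "l \<le> card X"
  obtains L where "L \<subseteq> X" "card L = l" "max_list_mass X P l W i = (\<Sum>x\<in>L. P x * W x i)"
proof -
  obtain L where "L \<subseteq> X" "card L = l"
    using obtain_subset_with_card_n[OF assms(2)] by metis
  then have "{(\<Sum>x\<in>L. P x * W x i) | L. L \<subseteq> X \<and> card L = l} \<noteq> {}" by auto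
  then have "max_list_mass X P l W i \<in> {(\<Sum>x\<in>L. P x * W x i) | L. L \<subseteq> X \<and> card L = l}"
    unfolding max_list_mass_def by (intro Max_in finite_list_masses assms(1))
  then show ?thesis
    using that by blast
qed

lemma is_QR_row_sum: "is_QR X f \<rho> W \<Longrightarrow> x \<in> X \<Longrightarrow> W x 0 + W x 1 = 1"
  unfolding is_QR_def sum_Zset by auto

lemma sum_masses_eq_sum:
  assumes "is_QR X f \<rho> W" "S \<subseteq> X"
  shows "(\<Sum>x\<in>S. P x * W x 0) + (\<Sum>x\<in>S. P x * W x 1) = sum P S"
proof -
  have "(\<Sum>x\<in>S. P x * W x 0) + (\<Sum>x\<in>S. P x * W x 1) = (\<Sum>x\<in>S. P x * (W x 0 + W x 1))"
    by (simp add: sum.distrib distrib_left)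
  also have "\<dots> = sum P S"
    using is_QR_row_sum[OF assms(1)] assms(2) by (intro sum.cong) auto
  finally show ?thesis .
qed

text \<open>On output \<open>i\<close>, guess \<open>\<Lambda>\<close> together with the most likely elements of
  \<open>f\<^sup>-\<^sup>1(i) - \<Lambda>\<close>, padded to a list of size \<open>l\<close>.\<close>
lemma max_list_mass_ge:
  fixes P :: "'a \<Rightarrow> real"
  assumes QR: "is_QR X f \<rho> W" and X: "finite X" "l \<le> card X"
    and P: "\<forall>x\<in>X. 0 \<le> P x" and \<Lambda>: "\<Lambda> \<subseteq> X" "card \<Lambda> \<le> l" and i: "i \<in> Zset"
  shows "(\<Sum>x\<in>\<Lambda>. P x * W x i) + \<rho> * sum P (top_set P (preim X f i - \<Lambda>) (l - card \<Lambda>))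
    \<le> max_list_mass X P l W i"
proof -
  define T where "T = top_set P (preim X f i - \<Lambda>) (l - card \<Lambda>)"
  have fin: "finite (preim X f i - \<Lambda>)" "finite \<Lambda>"
    using X \<Lambda> finite_subset unfolding preim_def by auto
  have T: "T \<subseteq> preim X f i - \<Lambda>" "card T \<le> l - card \<Lambda>" "finite T"
    unfolding T_def using top_set_subset[OF fin(1)] card_top_set[OF fin(1)]
    by (auto intro: finite_subset[OF _ fin(1)])
  then have "card (\<Lambda> \<union> T) \<le> l"
    using card_Un_le[of \<Lambda> T] \<Lambda>(2) by linarith
  moreover have "\<Lambda> \<union> T \<subseteq> X"
    using \<Lambda> T unfolding preim_def by auto
  ultimately obtain L where L: "\<Lambda> \<union> T \<subseteq> L" "L \<subseteq> X" "card L = l"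
    using exists_subset_between X by metis
  have "\<rho> * sum P T \<le> (\<Sum>x\<in>T. P x * W x i)"
    unfolding sum_distrib_left
  proof (intro sum_mono)
    fix x assume "x \<in> T"
    then have "x \<in> X" "f x = i"
      using T(1) by (auto simp: preim_def)
    then show "\<rho> * P x \<le> P x * W x i"
      using QR P by (metis is_QR_def mult.commute mult_right_mono)
  qed
  moreover have "(\<Sum>x\<in>\<Lambda>. P x * W x i) + (\<Sum>x\<in>T. P x * W x i) = (\<Sum>x\<in>\<Lambda> \<union> T. P x * W x i)"
    using fin T by (intro sum.union_disjoint[symmetric]) auto
  moreover have "(\<Sum>x\<in>\<Lambda> \<union> T. P x * W x i) \<le> (\<Sum>x\<in>L. P x * W x i)"
    using QR P L i X by (intro sum_mono2) (auto simp: is_QR_def intro: finite_subset)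
  moreover have "(\<Sum>x\<in>L. P x * W x i) \<le> max_list_mass X P l W i"
    using L X by (intro list_mass_le_max_list_mass)
  ultimately show ?thesis
    unfolding T_def by linarith
qed

lemma Jobj_le_max_list_masses:
  fixes P :: "'a \<Rightarrow> real"
  assumes "is_QR X f \<rho> W" "finite X" "l \<le> card X" "\<forall>x\<in>X. 0 \<le> P x" "\<Lambda> \<subseteq> X" "card \<Lambda> \<le> l"
  shows "Jobj X P f l \<rho> \<Lambda> \<le> max_list_mass X P l W 0 + max_list_mass X P l W 1"
  using max_list_mass_ge[OF assms, of 0] max_list_mass_ge[OF assms, of 1]
    sum_masses_eq_sum[OF assms(1,5), of P]
  unfolding Jobj_eq sum_Zset by (simp add: Zset_def algebra_simps)

lemma list_privacy_W_le_pi_u: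
  fixes P :: "'a \<Rightarrow> real"
  assumes "is_QR X f \<rho> W" "finite X" "X \<noteq> {}" "l \<le> card X" "\<forall>x\<in>X. 0 \<le> P x"
  shows "list_privacy_W X P l W \<le> pi_u X P f l \<rho>"
proof -
  have "Lambda_rho X P f l \<rho> \<subseteq> X" "card (Lambda_rho X P f l \<rho>) \<le> l"
    using is_Lambda_rho_Lambda_rho[OF assms(2,3), of P f l \<rho>] unfolding is_Lambda_rho_def by auto
  then have "Jobj X P f l \<rho> (Lambda_rho X P f l \<rho>) \<le> max_list_mass X P l W 0 + max_list_mass X P l W 1"
    by (rule Jobj_le_max_list_masses[OF assms(1,2,4,5)])
  then show ?thesis
    unfolding list_privacy_W_eq pi_u_def by linarith
qed

text \<open>The add-noise QR \<open>F(X) = f(X) + N mod 2\<close> with \<open>P(N = 0) = c\<close>.\<close>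
definition noise_QR :: "real \<Rightarrow> ('a \<Rightarrow> nat) \<Rightarrow> 'a \<Rightarrow> nat \<Rightarrow> real"
  where "noise_QR c f x i = (if i = f x then c else 1 - c)"

lemma is_addnoise_QR_noise_QR:
  assumes "\<forall>x\<in>X. f x \<in> Zset" "\<rho> \<le> c" "0 \<le> c" "c \<le> 1"
  shows "is_addnoise_QR X f \<rho> (noise_QR c f)"
  using assms unfolding is_addnoise_QR_def is_QR_def noise_QR_def sum_Zset
  by (auto simp: Zset_def)

lemma sum_exchange:
  "finite L \<Longrightarrow> x \<in> L \<Longrightarrow> y \<notin> L \<Longrightarrow>
    sum g (insert y (L - {x})) = sum g L - g x + (g y :: real)"
  by (simp add: sum_diff1)

lemma card_exchange:
  "finite L \<Longrightarrow> x \<in> L \<Longrightarrow> y \<notin> L \<Longrightarrow> card (insert y (L - {x})) = card L"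
  using card_Suc_Diff1[of L x] by simp

text \<open>Each improving exchange shrinks \<open>L\<^sub>0 - L\<^sub>1\<close>, so it suffices to bound pairs that
  no exchange improves.\<close>
lemma sum_pair_le_by_exchange:
  fixes g h :: "'a \<Rightarrow> real"
  assumes "finite X"
    and stable: "\<And>L0 L1. L0 \<subseteq> X \<Longrightarrow> L1 \<subseteq> X \<Longrightarrow> card L0 = k \<Longrightarrow> card L1 = k \<Longrightarrow>
      (\<And>x y. x \<in> L0 - L1 \<Longrightarrow> y \<in> L1 - L0 \<Longrightarrow> g y < g x \<and> h x < h y) \<Longrightarrow>
      sum g L0 + sum h L1 \<le> m"
  shows "L0 \<subseteq> X \<Longrightarrow> L1 \<subseteq> X \<Longrightarrow> card L0 = k \<Longrightarrow> card L1 = k \<Longrightarrow> sum g L0 + sum h L1 \<le> m"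
proof (induction "card (L0 - L1)" arbitrary: L0 L1 rule: less_induct)
  case less
  show ?case
  proof (cases "\<forall>x\<in>L0 - L1. \<forall>y\<in>L1 - L0. g y < g x \<and> h x < h y")
    case True
    then show ?thesis using stable less.prems by blast
  next
    case False
    then obtain x y where x: "x \<in> L0" "x \<notin> L1" and y: "y \<in> L1" "y \<notin> L0"
      and improving: "g x \<le> g y \<or> h y \<le> h x"
      by (auto simp: not_less)
    have fin: "finite L0" "finite L1"
      using less.prems assms(1) finite_subset by auto
    have smaller: "card ((L0 - L1) - {x}) < card (L0 - L1)"
      using x fin by (intro card_Diff1_less) auto
    from improving show ?thesis
    proof
      assume "g x \<le> g y"
      have "insert y (L0 - {x}) - L1 = (L0 - L1) - {x}" using y by auto
      then have "sum g (insert y (L0 - {x})) + sum h L1 \<le> m"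
        using smaller less.prems x y card_exchange[OF fin(1) x(1) y(2)]
        by (intro less.hyps) auto
      then show ?thesis
        using sum_exchange[OF fin(1) x(1) y(2), of g] \<open>g x \<le> g y\<close> by linarith
    next
      assume "h y \<le> h x"
      have "L0 - insert x (L1 - {y}) = (L0 - L1) - {x}" using y by auto
      then have "sum g L0 + sum h (insert x (L1 - {y})) \<le> m"
        using smaller less.prems x y card_exchange[OF fin(2) y(1) x(2)]
        by (intro less.hyps) auto
      then show ?thesis
        using sum_exchange[OF fin(2) y(1) x(2), of h] \<open>h y \<le> h x\<close> by linarith
    qed
  qed
qed

lemma noise_QR_stable_pair:
  fixes P :: "'a \<Rightarrow> real"
  assumes c: "1/2 \<le> c" "c \<le> 1" and P: "0 \<le> P x" "0 \<le> P y" and f: "f x \<in> Zset" "f y \<in> Zset"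
    and less0: "P y * noise_QR c f y 0 < P x * noise_QR c f x 0"
    and less1: "P x * noise_QR c f x 1 < P y * noise_QR c f y 1"
  shows "f x = 0 \<and> f y = 1 \<and> 1/2 < c"
proof -
  have mono: "P x * (1 - c) \<le> P x * c" "P y * (1 - c) \<le> P y * c"
    using c P by (auto intro: mult_left_mono)
  from f consider "f x = 0" "f y = 0" | "f x = 0" "f y = 1" | "f x = 1" "f y = 0"
    | "f x = 1" "f y = 1"
    unfolding Zset_def by auto
  then show ?thesis
  proof cases
    case 1
    then show ?thesis
      using less0 less1 c by (simp add: noise_QR_def mult_less_cancel_right)
  next
    case 2
    have "c \<noteq> 1/2"
    proof
      assume "c = 1/2"
      then have "1 - c = c" by simp
      moreover have "P y * (1 - c) < P x * c" "P x * (1 - c) < P y * c"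
        using less0 less1 2 by (simp_all add: noise_QR_def)
      ultimately show False by (simp only:)
    qed
    then show ?thesis using 2 c by simp
  next
    case 3
    then show ?thesis
      using less0 less1 mono by (simp add: noise_QR_def)
  next
    case 4
    then show ?thesis
      using less0 less1 c by (simp add: noise_QR_def mult_less_cancel_right)
  qed
qed

lemma sum_masses_split:
  assumes "is_QR X f \<rho> W" "L0 \<subseteq> X" "L1 \<subseteq> X" "finite L0" "finite L1"
  shows "(\<Sum>x\<in>L0. P x * W x 0) + (\<Sum>x\<in>L1. P x * W x 1)
    = sum P (L0 \<inter> L1) + (\<Sum>x\<in>L0 - L1. P x * W x 0) + (\<Sum>x\<in>L1 - L0. P x * W x 1)"
proof -
  have "L0 \<inter> L1 \<subseteq> X" using assms(2) by auto
  then have "(\<Sum>x\<in>L0 \<inter> L1. P x * W x 0) + (\<Sum>x\<in>L0 \<inter> L1. P x * W x 1) = sum P (L0 \<inter> L1)"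
    using sum_masses_eq_sum[OF assms(1)] by blast
  moreover have "(\<Sum>x\<in>L0. P x * W x 0) = (\<Sum>x\<in>L0 \<inter> L1. P x * W x 0) + (\<Sum>x\<in>L0 - L1. P x * W x 0)"
    "(\<Sum>x\<in>L1. P x * W x 1) = (\<Sum>x\<in>L0 \<inter> L1. P x * W x 1) + (\<Sum>x\<in>L1 - L0. P x * W x 1)"
    using sum.Int_Diff[OF assms(4), of "\<lambda>x. P x * W x 0" L1]
      sum.Int_Diff[OF assms(5), of "\<lambda>x. P x * W x 1" L0]
    by (simp_all add: Int_commute)
  ultimately show ?thesis by linarith
qed

lemma noise_QR_stable_lists:
  fixes P :: "'a \<Rightarrow> real"
  assumes c: "1/2 \<le> c" "c \<le> 1" and P: "\<forall>x\<in>X. 0 \<le> P x" and f: "\<forall>x\<in>X. f x \<in> Zset"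
    and L: "L0 \<subseteq> X" "L1 \<subseteq> X"
    and stable: "\<And>x y. x \<in> L0 - L1 \<Longrightarrow> y \<in> L1 - L0 \<Longrightarrow>
      P y * noise_QR c f y 0 < P x * noise_QR c f x 0 \<and> P x * noise_QR c f x 1 < P y * noise_QR c f y 1"
    and x0: "x0 \<in> L0 - L1" and y0: "y0 \<in> L1 - L0"
  shows "1/2 < c" "L0 - L1 \<subseteq> preim X f 0" "L1 - L0 \<subseteq> preim X f 1"
proof -
  have pair: "f x = 0 \<and> f y = 1 \<and> 1/2 < c" if "x \<in> L0 - L1" "y \<in> L1 - L0" for x y
    using stable[OF that] that L P f c by (intro noise_QR_stable_pair[where P = P]) auto
  show "1/2 < c"
    using pair[OF x0 y0] by blast
  show "L0 - L1 \<subseteq> preim X f 0"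
    using pair[OF _ y0] L by (auto simp: preim_def)
  show "L1 - L0 \<subseteq> preim X f 1"
    using pair[OF x0] L by (auto simp: preim_def)
qed

lemma noise_QR_stable_pair_le_Jobj:
  fixes P :: "'a \<Rightarrow> real"
  assumes X: "finite X" and P: "\<forall>x\<in>X. 0 \<le> P x" and f: "\<forall>x\<in>X. f x \<in> Zset"
    and \<rho>: "0 \<le> \<rho>" "\<rho> \<le> 1"
    and L: "L0 \<subseteq> X" "L1 \<subseteq> X" "card L0 = l" "card L1 = l"
    and stable: "\<And>x y. x \<in> L0 - L1 \<Longrightarrow> y \<in> L1 - L0 \<Longrightarrow>
      P y * noise_QR (max \<rho> (1/2)) f y 0 < P x * noise_QR (max \<rho> (1/2)) f x 0 \<and>
      P x * noise_QR (max \<rho> (1/2)) f x 1 < P y * noise_QR (max \<rho> (1/2)) f y 1"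
  shows "(\<Sum>x\<in>L0. P x * noise_QR (max \<rho> (1/2)) f x 0) + (\<Sum>x\<in>L1. P x * noise_QR (max \<rho> (1/2)) f x 1)
    \<le> Jobj X P f l \<rho> (L0 \<inter> L1)"
proof -
  define W where "W = noise_QR (max \<rho> (1/2)) f"
  have QR: "is_QR X f \<rho> W"
    using is_addnoise_QR_noise_QR[OF f] \<rho> unfolding W_def is_addnoise_QR_def by simp
  have fin: "finite L0" "finite L1"
    using finite_subset[OF L(1) X] finite_subset[OF L(2) X] .
  have card_diff: "card (L0 - L1) = l - card (L0 \<inter> L1)" "card (L1 - L0) = l - card (L0 \<inter> L1)"
    using L fin by (simp_all add: card_Diff_subset_Int Int_commute)
  note split = sum_masses_split[OF QR L(1,2) fin, of P]
  have "(\<Sum>x\<in>L0. P x * W x 0) + (\<Sum>x\<in>L1. P x * W x 1) \<le> Jobj X P f l \<rho> (L0 \<inter> L1)"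
  proof (cases "L0 - L1 = {}")
    case True
    moreover have "L1 - L0 = {}"
      using card_diff fin unfolding True by simp
    ultimately show ?thesis
      using split sum_le_Jobj[OF X P \<rho>(1)] by simp
  next
    case False
    then obtain x0 where x0: "x0 \<in> L0 - L1" by blast
    have "0 < card (L0 - L1)"
      using False fin by auto
    then have "L1 - L0 \<noteq> {}"
      using card_diff card_gt_0_iff by fastforce
    then obtain y0 where y0: "y0 \<in> L1 - L0" by blast
    have c: "1/2 \<le> max \<rho> (1/2)" "max \<rho> (1/2) \<le> 1"
      using \<rho> by auto
    note lists = noise_QR_stable_lists[OF c P f L(1,2) stable x0 y0]
    have "max \<rho> (1/2) = \<rho>"
      using lists(1) by (auto simp: max_def split: if_split_asm)
    then have "(\<Sum>x\<in>L0 - L1. P x * W x 0) = \<rho> * sum P (L0 - L1)"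
      and "(\<Sum>x\<in>L1 - L0. P x * W x 1) = \<rho> * sum P (L1 - L0)"
      unfolding sum_distrib_left using lists(2,3)
      by (auto simp: W_def noise_QR_def preim_def mult.commute intro!: sum.cong)
    moreover have "sum P (L0 \<inter> L1) + \<rho> * (\<Sum>i\<in>Zset. sum P (if i = 0 then L0 - L1 else L1 - L0))
        \<le> Jobj X P f l \<rho> (L0 \<inter> L1)"
      using lists(2,3) card_diff by (intro Jobj_ge[OF X P \<rho>(1)]) (auto simp: Zset_def)
    moreover have "\<rho> * (sum P (L0 - L1) + sum P (L1 - L0)) = \<rho> * sum P (L0 - L1) + \<rho> * sum P (L1 - L0)"
      by (simp add: distrib_left)
    ultimately show ?thesis
      using split unfolding sum_Zset by simp
  qed
  then show ?thesis
    unfolding W_def .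
qed

lemma pi_u_le_list_privacy_W_noise_QR:
  fixes P :: "'a \<Rightarrow> real"
  assumes X: "finite X" "l < card X" and P: "\<forall>x\<in>X. 0 \<le> P x" and f: "\<forall>x\<in>X. f x \<in> Zset"
    and \<rho>: "0 \<le> \<rho>" "\<rho> \<le> 1"
  shows "pi_u X P f l \<rho> \<le> list_privacy_W X P l (noise_QR (max \<rho> (1/2)) f)"
proof -
  let ?W = "noise_QR (max \<rho> (1/2)) f"
  let ?m = "Jobj X P f l \<rho> (Lambda_rho X P f l \<rho>)"
  have "X \<noteq> {}" using X by auto
  have bound: "(\<Sum>x\<in>L0. P x * ?W x 0) + (\<Sum>x\<in>L1. P x * ?W x 1) \<le> ?m"
    if L: "L0 \<subseteq> X" "L1 \<subseteq> X" "card L0 = l" "card L1 = l" for L0 L1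
  proof (rule sum_pair_le_by_exchange[OF X(1) _ L])
    fix L0 L1
    assume L: "L0 \<subseteq> X" "L1 \<subseteq> X" "card L0 = l" "card L1 = l"
      and stable: "\<And>x y. x \<in> L0 - L1 \<Longrightarrow> y \<in> L1 - L0 \<Longrightarrow>
        P y * ?W y 0 < P x * ?W x 0 \<and> P x * ?W x 1 < P y * ?W y 1"
    have "card (L0 \<inter> L1) \<le> l"
      using L(3) card_mono[OF finite_subset[OF L(1) X(1)], of "L0 \<inter> L1"] by auto
    then have "L0 \<inter> L1 \<subset> X"
      using L X by auto
    then have "Jobj X P f l \<rho> (L0 \<inter> L1) \<le> ?m"
      using \<open>card (L0 \<inter> L1) \<le> l\<close> is_Lambda_rho_Lambda_rho[OF X(1) \<open>X \<noteq> {}\<close>]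
      unfolding is_Lambda_rho_def by blast
    then show "(\<Sum>x\<in>L0. P x * ?W x 0) + (\<Sum>x\<in>L1. P x * ?W x 1) \<le> ?m"
      using noise_QR_stable_pair_le_Jobj[OF X(1) P f \<rho> L stable] by linarith
  qed
  obtain L0 where "L0 \<subseteq> X" "card L0 = l" "max_list_mass X P l ?W 0 = (\<Sum>x\<in>L0. P x * ?W x 0)"
    using max_list_mass_attained[OF X(1) less_imp_le[OF X(2)]] .
  moreover obtain L1 where "L1 \<subseteq> X" "card L1 = l" "max_list_mass X P l ?W 1 = (\<Sum>x\<in>L1. P x * ?W x 1)"
    using max_list_mass_attained[OF X(1) less_imp_le[OF X(2)]] .
  ultimately show ?thesis
    using bound[of L0 L1] unfolding list_privacy_W_eq pi_u_def by simp
qed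

lemma list_privacy_W_noise_QR_eq_pi_u:
  fixes P :: "'a \<Rightarrow> real"
  assumes "finite X" "l < card X" "\<forall>x\<in>X. 0 \<le> P x" "\<forall>x\<in>X. f x \<in> Zset" "0 \<le> \<rho>" "\<rho> \<le> 1"
  shows "list_privacy_W X P l (noise_QR (max \<rho> (1/2)) f) = pi_u X P f l \<rho>"
proof (rule order_antisym)
  have "is_QR X f \<rho> (noise_QR (max \<rho> (1/2)) f)"
    using is_addnoise_QR_noise_QR[OF assms(4)] assms(5,6) unfolding is_addnoise_QR_def by simp
  moreover have "X \<noteq> {}" "l \<le> card X"
    using assms(2) by auto
  ultimately show "list_privacy_W X P l (noise_QR (max \<rho> (1/2)) f) \<le> pi_u X P f l \<rho>"
    using assms(1,3) by (intro list_privacy_W_le_pi_u)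
  show "pi_u X P f l \<rho> \<le> list_privacy_W X P l (noise_QR (max \<rho> (1/2)) f)"
    using assms by (rule pi_u_le_list_privacy_W_noise_QR)
qed

lemma list_privacy_eq_pi_u:
  fixes P :: "'a \<Rightarrow> real"
  assumes "finite X" "l < card X" "\<forall>x\<in>X. 0 \<le> P x" "\<forall>x\<in>X. f x \<in> Zset" "0 \<le> \<rho>" "\<rho> \<le> 1"
  shows "list_privacy X P f l \<rho> = pi_u X P f l \<rho>"
  unfolding list_privacy_def
proof (rule cSup_eq_maximum)
  have "is_QR X f \<rho> (noise_QR (max \<rho> (1/2)) f)"
    using is_addnoise_QR_noise_QR[OF assms(4)] assms(5,6) unfolding is_addnoise_QR_def by simp
  then show "pi_u X P f l \<rho> \<in> {list_privacy_W X P l W |W. is_QR X f \<rho> W}"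
    using list_privacy_W_noise_QR_eq_pi_u[OF assms, symmetric] by blast
next
  have "X \<noteq> {}" "l \<le> card X"
    using assms(2) by auto
  fix p assume "p \<in> {list_privacy_W X P l W |W. is_QR X f \<rho> W}"
  then show "p \<le> pi_u X P f l \<rho>"
    using list_privacy_W_le_pi_u[OF _ assms(1) \<open>X \<noteq> {}\<close> \<open>l \<le> card X\<close> assms(3)] by blast
qed

theorem theorem2:
  fixes X :: "'a set" and P :: "'a \<Rightarrow> real" and f :: "'a \<Rightarrow> nat"
    and l :: nat and \<rho> :: real
  assumes "finite X" and "card X \<ge> 2"
    and "\<forall>x\<in>X. P x > 0" and "(\<Sum>x\<in>X. P x) = 1"
    and "\<forall>x\<in>X. f x \<in> Zset"
    and "1 \<le> l" and "l < card X"
    and "0 \<le> \<rho>" and "\<rho> \<le> 1"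
  shows "list_privacy X P f l \<rho> = pi_u X P f l \<rho>
    \<and> (\<forall>\<Lambda>. is_Lambda_rho X P f l \<rho> \<Lambda> \<longrightarrow>
          pi_u X P f l \<rho> = 1 - (sum P \<Lambda> + \<rho> * (\<Sum>i\<in>Zset.
              sum P (top_set P (preim X f i - \<Lambda>) (l - card \<Lambda>)))))
    \<and> (\<exists>W. is_addnoise_QR X f \<rho> W \<and> list_privacy_W X P l W = list_privacy X P f l \<rho>)"
proof -
  have "X \<noteq> {}"
    using assms(2) by auto
  have P: "\<forall>x\<in>X. 0 \<le> P x"
    using assms(3) by (simp add: less_imp_le)
  note setting = assms(1,7) P assms(5,8,9)
  have "is_addnoise_QR X f \<rho> (noise_QR (max \<rho> (1/2)) f)"
    using assms(5,8,9) by (intro is_addnoise_QR_noise_QR) auto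
  moreover have "pi_u X P f l \<rho> = 1 - (sum P \<Lambda> + \<rho> * (\<Sum>i\<in>Zset.
      sum P (top_set P (preim X f i - \<Lambda>) (l - card \<Lambda>))))"
    if "is_Lambda_rho X P f l \<rho> \<Lambda>" for \<Lambda>
    using pi_u_eq_if_is_Lambda_rho[OF assms(1) \<open>X \<noteq> {}\<close> that] unfolding Jobj_eq .
  ultimately show ?thesis
    using list_privacy_eq_pi_u[OF setting] list_privacy_W_noise_QR_eq_pi_u[OF setting] by auto
qed

end
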